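(* Let $E\in\mathbb{S}^n_{++}$ and $0<\alpha<\sqrt n$. Then $K_E(\alpha)^*=K_{E^{-1}}\big(\sqrt{n-\alpha^2}\big)$.
   Context: $\mathbb{S}^n$ is the space of real symmetric $n\times n$ matrices with the trace inner product, $\mathbb{S}^n_{++}$ the positive definite matrices. For $F\in\mathbb{S}^n_{++}$ and $\gamma\ge0$, $K_F(\gamma)=\{X\in\mathbb{S}^n:\mathrm{tr}(F^{-1}X)\ge\gamma\,\mathrm{tr}((F^{-1}X)^2)^{1/2}\}$. $K_E(\alpha)^*=\{S:\mathrm{tr}(XS)\ge0\ \forall X\in K_E(\alpha)\}$ is the dual cone with respect to the trace inner product. *)

theory Defs
  imports "HOL-Analysis.Analysis"
begin

definition sym_mat :: "real^'n^'n \<Rightarrow> bool" where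
  "sym_mat A \<longleftrightarrow> transpose A = A"

definition pos_def :: "real^'n^'n \<Rightarrow> bool" where
  "pos_def A \<longleftrightarrow> sym_mat A \<and> (\<forall>x. x \<noteq> 0 \<longrightarrow> x \<bullet> (A *v x) > 0)"

definition K_cone :: "real^'n^'n \<Rightarrow> real \<Rightarrow> (real^'n^'n) set" where
  "K_cone F \<gamma> = {X. sym_mat X \<and>
     trace (matrix_inv F ** X) \<ge> \<gamma> * sqrt (trace ((matrix_inv F ** X) ** (matrix_inv F ** X)))}"

definition dual_cone :: "(real^'n^'n) set \<Rightarrow> (real^'n^'n) set" where
  "dual_cone K = {S. sym_mat S \<and> (\<forall>X\<in>K. trace (X ** S) \<ge> 0)}"

end

theory Submission
  imports Defs
begin

text \<open>Write \<open>E = V V\<^sup>T\<close> and \<open>U = V\<^sup>-\<^sup>1\<close>. The congruences \<open>X \<mapsto> U X U\<^sup>T\<close> and \<open>S \<mapsto> V\<^sup>T S V\<close>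
  preserve the trace pairing and carry \<open>K_E(\<alpha>)\<close> and \<open>K_{E\<^sup>-\<^sup>1}(\<beta>)\<close> onto the circular cones
  \<open>{Y. \<gamma> \<parallel>Y\<parallel> \<le> \<langle>I, Y\<rangle>}\<close>, \<open>\<gamma> = \<alpha>, \<beta>\<close>, in the Euclidean space of symmetric matrices with
  the Frobenius inner product. As \<open>\<parallel>I\<parallel>\<^sup>2 = n\<close>, these are the cones of half-angles \<open>\<theta>\<close> and
  \<open>\<pi>/2 - \<theta>\<close> around \<open>I\<close>, where \<open>cos \<theta> = \<alpha>/\<surd>n\<close> and \<open>\<beta> = \<surd>(n - \<alpha>\<^sup>2)\<close>; and the dual of a
  circular cone is the circular cone of complementary half-angle.\<close>

definition circular_cone :: "'a::real_inner \<Rightarrow> real \<Rightarrow> 'a set" where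
  "circular_cone e \<gamma> = {y. \<gamma> * norm y \<le> inner e y}"

definition orth_comp :: "'a::real_inner \<Rightarrow> 'a \<Rightarrow> 'a" where
  "orth_comp e y = y - (inner e y / inner e e) *\<^sub>R e"

lemma inner_orth_comp_split:
  fixes e y z :: "'a::real_inner"
  assumes "e \<noteq> 0"
  shows "inner y z = inner e y * inner e z / inner e e + inner (orth_comp e y) (orth_comp e z)"
  using assms unfolding orth_comp_def
  by (simp add: inner_diff_left inner_diff_right inner_commute field_simps)

lemma norm_orth_comp_split:
  fixes e y :: "'a::real_inner"
  assumes "e \<noteq> 0"
  shows "(norm y)\<^sup>2 = (inner e y)\<^sup>2 / inner e e + (norm (orth_comp e y))\<^sup>2"
  using inner_orth_comp_split[OF assms, of y y] by (metis power2_eq_square power2_norm_eq_inner)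

text \<open>The cone condition as \<open>\<parallel>y\<^sub>\<bottom>\<parallel> \<le> tan \<theta> \<cdot> \<langle>e, y\<rangle> / \<parallel>e\<parallel>\<close> with \<open>tan \<theta> = \<surd>(n - \<alpha>\<^sup>2) / \<alpha>\<close>;
  replacing \<open>\<alpha>\<close> by \<open>\<surd>(n - \<alpha>\<^sup>2)\<close> replaces \<open>tan \<theta>\<close> by its reciprocal.\<close>

lemma mem_circular_cone_iff:
  fixes e y :: "'a::real_inner"
  assumes e: "inner e e = n" and \<alpha>: "0 \<le> \<alpha>" "\<alpha>\<^sup>2 < n"
  shows "y \<in> circular_cone e \<alpha> \<longleftrightarrow>
    \<alpha> * sqrt n * norm (orth_comp e y) \<le> sqrt (n - \<alpha>\<^sup>2) * inner e y"
proof -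
  define a where "a = inner e y"
  define r where "r = norm (orth_comp e y)"
  have n: "0 < n" using \<alpha> zero_le_power2[of \<alpha>] by linarith
  hence "e \<noteq> 0" using e by auto
  from norm_orth_comp_split[OF this, of y]
  have y: "(norm y)\<^sup>2 = a\<^sup>2 / n + r\<^sup>2" unfolding a_def r_def e .
  have le_iff_sq_le: "p \<le> q \<longleftrightarrow> 0 \<le> q \<and> p\<^sup>2 \<le> q\<^sup>2" if "0 \<le> p" for p q :: real
    using that by (auto intro: power_mono power2_le_imp_le)
  have "\<alpha> * norm y \<le> a \<longleftrightarrow> 0 \<le> a \<and> (\<alpha> * norm y)\<^sup>2 \<le> a\<^sup>2"
    using \<alpha> by (intro le_iff_sq_le) simp
  also have "(\<alpha> * norm y)\<^sup>2 \<le> a\<^sup>2 \<longleftrightarrow> (\<alpha> * sqrt n * r)\<^sup>2 \<le> (sqrt (n - \<alpha>\<^sup>2) * a)\<^sup>2"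
    using n \<alpha> by (simp add: y field_simps)
  also have "0 \<le> a \<and> \<dots> \<longleftrightarrow> \<alpha> * sqrt n * r \<le> sqrt (n - \<alpha>\<^sup>2) * a"
  proof -
    have "0 \<le> \<alpha> * sqrt n * r" using \<alpha> n unfolding r_def by simp
    moreover have "0 \<le> sqrt (n - \<alpha>\<^sup>2) * a \<longleftrightarrow> 0 \<le> a"
      using \<alpha> by (simp add: zero_le_mult_iff)
    ultimately show ?thesis using le_iff_sq_le by blast
  qed
  finally show ?thesis unfolding circular_cone_def a_def r_def by simp
qed

lemma inner_orth_comp_self:
  fixes e y :: "'a::real_inner"
  assumes "e \<noteq> 0"
  shows "inner e (orth_comp e y) = 0"
  using assms unfolding orth_comp_def by (simp add: inner_diff_right)

lemma circular_cone_inner_nonneg: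
  fixes e y z :: "'a::real_inner"
  assumes e: "inner e e = n" and \<alpha>: "0 < \<alpha>" "\<alpha>\<^sup>2 < n"
    and y: "y \<in> circular_cone e \<alpha>" and z: "z \<in> circular_cone e (sqrt (n - \<alpha>\<^sup>2))"
  shows "0 \<le> inner y z"
proof -
  define \<beta> where "\<beta> = sqrt (n - \<alpha>\<^sup>2)"
  define a where "a = inner e y"
  define b where "b = inner e z"
  define r where "r = norm (orth_comp e y)"
  define s where "s = norm (orth_comp e z)"
  have n: "0 < n" using \<alpha> zero_le_power2[of \<alpha>] by linarith
  have \<beta>: "0 < \<beta>" "\<beta>\<^sup>2 < n" "sqrt (n - \<beta>\<^sup>2) = \<alpha>"
    using \<alpha> unfolding \<beta>_def by auto
  have hy: "\<alpha> * sqrt n * r \<le> \<beta> * a"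
    using y mem_circular_cone_iff[OF e] \<alpha> unfolding \<beta>_def a_def r_def by simp
  have hz: "\<beta> * sqrt n * s \<le> \<alpha> * b"
    using z mem_circular_cone_iff[OF e, of \<beta>] \<beta> unfolding \<beta>_def b_def s_def by simp
  have "(\<alpha> * \<beta> * n) * (r * s) = (\<alpha> * sqrt n * r) * (\<beta> * sqrt n * s)"
    using n by (simp add: algebra_simps)
  also have "\<dots> \<le> (\<beta> * a) * (\<alpha> * b)"
  proof (rule mult_mono[OF hy hz])
    show "0 \<le> \<beta> * sqrt n * s" using \<beta> n unfolding s_def by simp
    have "0 \<le> \<alpha> * sqrt n * r" using \<alpha> n unfolding r_def by simp
    with hy show "0 \<le> \<beta> * a" by linarith
  qed
  also have "\<dots> = (\<alpha> * \<beta> * n) * (a * b / n)"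
    using n by (simp add: field_simps)
  finally have "r * s \<le> a * b / n"
    using \<alpha> \<beta> n by (simp add: mult_le_cancel_left_pos field_simps)
  moreover have "- (r * s) \<le> inner (orth_comp e y) (orth_comp e z)"
    using Cauchy_Schwarz_ineq2[of "orth_comp e y" "orth_comp e z"] unfolding r_def s_def
    by (simp add: abs_le_iff)
  moreover have "inner y z = a * b / n + inner (orth_comp e y) (orth_comp e z)"
    using inner_orth_comp_split[of e y z] n e unfolding a_def b_def by auto
  ultimately show ?thesis by linarith
qed

lemma mem_circular_cone_if_dual:
  fixes e z :: "'a::real_inner"
  assumes W: "subspace W" "e \<in> W" "z \<in> W"
    and e: "inner e e = n" and \<alpha>: "0 < \<alpha>" "\<alpha>\<^sup>2 < n"
    and dual: "\<forall>y\<in>W. y \<in> circular_cone e \<alpha> \<longrightarrow> 0 \<le> inner y z"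
  shows "z \<in> circular_cone e (sqrt (n - \<alpha>\<^sup>2))"
proof -
  define \<beta> where "\<beta> = sqrt (n - \<alpha>\<^sup>2)"
  define b where "b = inner e z"
  define w where "w = orth_comp e z"
  have n: "0 < n" using \<alpha> zero_le_power2[of \<alpha>] by linarith
  hence "e \<noteq> 0" using e by auto
  have \<beta>: "0 < \<beta>" "\<beta>\<^sup>2 < n" "sqrt (n - \<beta>\<^sup>2) = \<alpha>"
    using \<alpha> unfolding \<beta>_def by auto
  have "e \<in> circular_cone e \<alpha>"
    using mem_circular_cone_iff[OF e] \<alpha> n \<open>e \<noteq> 0\<close> by (simp add: orth_comp_def e)
  hence b: "0 \<le> b" using dual W unfolding b_def by (simp add: inner_commute)
  have "\<beta> * sqrt n * norm w \<le> \<alpha> * b"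
  proof (cases "w = 0")
    case True
    thus ?thesis using b \<alpha> by simp
  next
    case False
    \<comment> \<open>the boundary ray of the \<open>\<alpha>\<close>-cone pointing away from \<open>w\<close>\<close>
    define t where "t = \<alpha> * sqrt n * norm w / \<beta>"
    define y where "y = (t / n) *\<^sub>R e - w"
    have ey: "inner e y = t" and wy: "orth_comp e y = - w"
      using n e inner_orth_comp_self[OF \<open>e \<noteq> 0\<close>, of z]
      unfolding y_def w_def by (simp_all add: orth_comp_def algebra_simps)
    have "y \<in> W" using W unfolding y_def w_def orth_comp_def
      by (intro subspace_diff subspace_scale) auto
    moreover have "y \<in> circular_cone e \<alpha>"
      using mem_circular_cone_iff[OF e] \<alpha> \<beta> by (simp add: ey wy t_def \<beta>_def[symmetric])
    ultimately have "0 \<le> inner y z" using dual by blast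
    also have "inner y z = t * b / n - (norm w)\<^sup>2"
      using inner_orth_comp_split[OF \<open>e \<noteq> 0\<close>, of y z] e
      by (simp add: ey wy b_def w_def power2_norm_eq_inner)
    finally have "norm w * norm w \<le> t * b / n" by (simp add: power2_eq_square)
    hence "(\<beta> * sqrt n * norm w) * norm w \<le> \<beta> * sqrt n * (t * b / n)"
      using n \<beta> unfolding mult.assoc[of "\<beta> * sqrt n"] by (intro mult_left_mono) auto
    also have "\<dots> = (\<alpha> * b) * norm w"
      using n \<beta> unfolding t_def by (simp add: field_simps)
    finally show ?thesis using False by (simp add: mult_le_cancel_right_pos)
  qed
  thus ?thesis using mem_circular_cone_iff[OF e, of \<beta> z] \<beta>
    unfolding \<beta>_def b_def w_def by simp
qed

lemma circular_cone_dual_in_subspace: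
  fixes e z :: "'a::real_inner"
  assumes "subspace W" "e \<in> W" "z \<in> W" "inner e e = n" "0 < \<alpha>" "\<alpha>\<^sup>2 < n"
  shows "(\<forall>y\<in>W. y \<in> circular_cone e \<alpha> \<longrightarrow> 0 \<le> inner y z) \<longleftrightarrow>
    z \<in> circular_cone e (sqrt (n - \<alpha>\<^sup>2))"
  using assms mem_circular_cone_if_dual circular_cone_inner_nonneg by blast

definition psd_mat :: "real^'n^'n \<Rightarrow> bool" where
  "psd_mat M \<longleftrightarrow> sym_mat M \<and> (\<forall>x. 0 \<le> x \<bullet> (M *v x))"

definition outer_prod :: "real^'n \<Rightarrow> real^'n^'n" where
  "outer_prod v = (\<chi> i j. v $ i * v $ j)"

lemma sym_mat_entry: "sym_mat M \<Longrightarrow> M $ i $ j = M $ j $ i"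
  unfolding sym_mat_def by (metis transpose_def vec_lambda_beta)

lemma sym_mat_inner_commute:
  fixes M :: "real^'n^'n"
  assumes "sym_mat M"
  shows "x \<bullet> (M *v y) = y \<bullet> (M *v x)"
  using assms unfolding sym_mat_def by (metis dot_lmul_matrix inner_commute vector_transpose_matrix)

lemma matrix_entry_eq_inner_axis: "(M::real^'n^'n) $ i $ j = axis i 1 \<bullet> (M *v axis j 1)"
  by (simp add: inner_axis' matrix_vector_mult_basis column_def)

lemma psd_mat_Cauchy_Schwarz:
  fixes M :: "real^'n^'n"
  assumes "psd_mat M"
  shows "(x \<bullet> (M *v y))\<^sup>2 \<le> (x \<bullet> (M *v x)) * (y \<bullet> (M *v y))"
proof -
  define b where "b = x \<bullet> (M *v y)"
  define p where "p = x \<bullet> (M *v x)"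
  define q where "q = y \<bullet> (M *v y)"
  have quad: "0 \<le> p + 2 * t * b + t\<^sup>2 * q" for t
  proof -
    have "0 \<le> (x + t *\<^sub>R y) \<bullet> (M *v (x + t *\<^sub>R y))" using assms unfolding psd_mat_def by blast
    also have "\<dots> = p + 2 * t * b + t\<^sup>2 * q"
      using sym_mat_inner_commute[of M y x] assms unfolding psd_mat_def p_def q_def b_def
      by (simp add: algebra_simps power2_eq_square)
    finally show ?thesis .
  qed
  show ?thesis
  proof (cases "q = 0")
    case True
    have "b = 0"
    proof (rule ccontr)
      assume "b \<noteq> 0"
      with quad[of "- (p + 1) / (2 * b)"] True show False by (simp add: field_simps)
    qed
    thus ?thesis using True unfolding b_def q_def by simp
  next
    case False
    hence "0 < q" using assms unfolding psd_mat_def q_def by (metis less_eq_real_def)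
    have "0 \<le> p + 2 * (- b / q) * b + (- b / q)\<^sup>2 * q" by (rule quad)
    also have "\<dots> = (p * q - b\<^sup>2) / q" using \<open>0 < q\<close> by (simp add: field_simps power2_eq_square)
    finally show ?thesis using \<open>0 < q\<close> unfolding b_def p_def q_def by (simp add: zero_le_divide_iff)
  qed
qed

lemma psd_mat_row_eq_0:
  assumes "psd_mat M" "M $ k $ k = 0"
  shows "M $ k $ j = 0"
proof -
  have "(M $ k $ j)\<^sup>2 \<le> M $ k $ k * M $ j $ j"
    using psd_mat_Cauchy_Schwarz[OF assms(1), of "axis k 1" "axis j 1"]
    by (simp only: matrix_entry_eq_inner_axis)
  thus ?thesis using assms(2) by simp
qed

lemma outer_prod_mult_vec: "outer_prod v *v x = (v \<bullet> x) *\<^sub>R v"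
  by (simp add: outer_prod_def matrix_vector_mult_def vec_eq_iff inner_vec_def sum_distrib_left
      sum_distrib_right algebra_simps)

lemma outer_prod_scaleR: "outer_prod (a *\<^sub>R v) = (a * a) *\<^sub>R outer_prod v"
  by (simp add: outer_prod_def vec_eq_iff)

lemma outer_prod_0 [simp]: "outer_prod 0 = 0"
  by (simp add: outer_prod_def vec_eq_iff)

lemma psd_mat_Schur_complement:
  fixes M :: "real^'n^'n"
  assumes M: "psd_mat M" and c: "0 < M $ k $ k"
  shows "psd_mat (M - (1 / M $ k $ k) *\<^sub>R outer_prod (column k M))"
proof -
  define c where "c = M $ k $ k"
  define u where "u = column k M"
  have "sym_mat (M - (1 / c) *\<^sub>R outer_prod u)"
    using M unfolding psd_mat_def sym_mat_def
    by (simp add: vec_eq_iff transpose_def outer_prod_def mult.commute)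
  moreover have "0 \<le> x \<bullet> ((M - (1 / c) *\<^sub>R outer_prod u) *v x)" for x
  proof -
    have "u \<bullet> x = x \<bullet> (M *v axis k 1)"
      by (simp add: u_def inner_commute matrix_vector_mult_basis)
    hence "(u \<bullet> x)\<^sup>2 \<le> (x \<bullet> (M *v x)) * c"
      using psd_mat_Cauchy_Schwarz[OF M, of x "axis k 1"] by (simp add: c_def matrix_entry_eq_inner_axis)
    hence "(u \<bullet> x)\<^sup>2 / c \<le> x \<bullet> (M *v x)" using c by (simp add: c_def divide_le_eq)
    thus ?thesis
      by (simp add: matrix_vector_mult_diff_rdistrib scaleR_matrix_vector_assoc[symmetric]
          outer_prod_mult_vec inner_diff_right power2_eq_square inner_commute)
  qed
  ultimately show ?thesis unfolding psd_mat_def c_def u_def by blast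
qed

lemma psd_mat_eq_sum_outer_prod:
  fixes M :: "real^'n^'n"
  assumes "finite I" "psd_mat M" "\<forall>i j. i \<notin> I \<longrightarrow> M $ i $ j = 0"
  shows "\<exists>v. M = (\<Sum>k\<in>I. outer_prod (v k))"
  using assms
proof (induction I arbitrary: M rule: finite_induct)
  case empty
  thus ?case by (simp add: vec_eq_iff)
next
  case (insert k I)
  show ?case
  proof (cases "M $ k $ k = 0")
    case True
    hence "\<forall>i j. i \<notin> I \<longrightarrow> M $ i $ j = 0"
      using insert.prems(2) psd_mat_row_eq_0[OF insert.prems(1) True] by (metis insert_iff)
    then obtain v where "M = (\<Sum>k\<in>I. outer_prod (v k))" using insert.IH insert.prems(1) by blast
    hence "M = (\<Sum>j\<in>insert k I. outer_prod ((v(k := 0)) j))"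
      using insert.hyps by (auto intro: sum.cong)
    thus ?thesis by blast
  next
    case False
    define c where "c = M $ k $ k"
    define u where "u = column k M"
    define N where "N = M - (1 / c) *\<^sub>R outer_prod u"
    have "0 \<le> c"
      using insert.prems(1) unfolding c_def matrix_entry_eq_inner_axis psd_mat_def by blast
    with False have c: "0 < c" unfolding c_def by simp
    have "psd_mat N" unfolding N_def c_def u_def using insert.prems(1) c c_def
      by (intro psd_mat_Schur_complement) auto
    moreover have "N $ i $ j = 0" if "i \<notin> I" for i j
    proof (cases "i = k")
      case True
      thus ?thesis using c insert.prems(1) sym_mat_entry[of M j k]
        by (simp add: N_def u_def c_def outer_prod_def column_def psd_mat_def)
    next
      case False
      thus ?thesis using that insert.prems(2) by (simp add: N_def u_def outer_prod_def column_def)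
    qed
    ultimately obtain v where v: "N = (\<Sum>k\<in>I. outer_prod (v k))" using insert.IH by blast
    define v' where "v' = v(k := (1 / sqrt c) *\<^sub>R u)"
    have "(\<Sum>j\<in>insert k I. outer_prod (v' j)) = outer_prod (v' k) + (\<Sum>j\<in>I. outer_prod (v' j))"
      using insert.hyps by simp
    also have "(\<Sum>j\<in>I. outer_prod (v' j)) = N"
      unfolding v v'_def using insert.hyps by (intro sum.cong) auto
    also have "outer_prod (v' k) = (1 / c) *\<^sub>R outer_prod u"
      unfolding v'_def using c by (simp add: outer_prod_scaleR real_sqrt_mult[symmetric])
    finally have "M = (\<Sum>j\<in>insert k I. outer_prod (v' j))" unfolding N_def by simp
    thus ?thesis by blast
  qed
qed

lemma psd_mat_factor:
  fixes M :: "real^'n^'n"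
  assumes "psd_mat M"
  shows "\<exists>V::real^'n^'n. M = V ** transpose V"
proof -
  obtain v :: "'n \<Rightarrow> real^'n" where v: "M = (\<Sum>k\<in>UNIV. outer_prod (v k))"
    using psd_mat_eq_sum_outer_prod[OF finite_class.finite_UNIV assms] by auto
  have "M = (\<chi> i j. v j $ i) ** transpose (\<chi> i j. v j $ i)"
    unfolding v by (simp add: vec_eq_iff matrix_matrix_mult_def transpose_def outer_prod_def)
  thus ?thesis by blast
qed

lemma matrix_inv_eqI:
  fixes A B :: "'a::field^'n^'n"
  assumes "A ** B = mat 1"
  shows "matrix_inv A = B"
proof -
  have "A ** matrix_inv A = mat 1 \<and> matrix_inv A ** A = mat 1"
    unfolding matrix_inv_def
    by (rule someI[of _ B]) (use assms matrix_left_right_inverse in blast)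
  hence "matrix_inv A ** (A ** B) = B" by (simp add: matrix_mul_assoc)
  thus ?thesis using assms by simp
qed

lemma pos_def_factor:
  fixes E :: "real^'n^'n"
  assumes "pos_def E"
  obtains U V :: "real^'n^'n" where "U ** V = mat 1" "E = V ** transpose V"
proof -
  have "psd_mat E" using assms unfolding pos_def_def psd_mat_def by (metis inner_zero_left order.refl less_imp_le)
  then obtain V :: "real^'n^'n" where V: "E = V ** transpose V" using psd_mat_factor by blast
  have "\<forall>x. E *v x = 0 \<longrightarrow> x = 0" using assms unfolding pos_def_def by (metis inner_zero_right less_irrefl)
  hence "invertible E" using matrix_left_invertible_ker invertible_left_inverse by blast
  hence "det V \<noteq> 0" unfolding V by (simp add: invertible_det_nz det_mul)
  then obtain U where "U ** V = mat 1" using invertible_det_nz invertible_left_inverse by blast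
  with V show ?thesis using that by blast
qed

lemma trace_mult_eq_inner:
  fixes A B :: "real^'n^'n"
  assumes "sym_mat B"
  shows "trace (A ** B) = A \<bullet> B"
  using sym_mat_entry[OF assms] by (simp add: trace_def matrix_matrix_mult_def inner_vec_def)

lemma trace_eq_inner_mat_1: "trace (A::real^'n^'n) = mat 1 \<bullet> A"
  using trace_mult_eq_inner[of "mat 1" A] by (simp add: sym_mat_def inner_commute)

lemma inner_mat_1_self: "mat 1 \<bullet> (mat 1 :: real^'n^'n) = real CARD('n)"
  using trace_eq_inner_mat_1[of "mat 1 :: real^'n^'n"] by (simp add: trace_I)

lemma norm_eq_sqrt_trace_square:
  fixes A :: "real^'n^'n"
  assumes "sym_mat A"
  shows "norm A = sqrt (trace (A ** A))"
  using assms by (simp add: trace_mult_eq_inner norm_eq_sqrt_inner)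

lemma sym_mat_congruence: "sym_mat X \<Longrightarrow> sym_mat (A ** X ** transpose A)"
  unfolding sym_mat_def by (simp add: matrix_transpose_mul matrix_mul_assoc)

lemma subspace_sym_mat: "subspace {X::real^'n^'n. sym_mat X}"
  unfolding subspace_def sym_mat_def by (simp add: vec_eq_iff transpose_def)

lemma K_cone_congruence:
  fixes F A :: "real^'n^'n"
  assumes "matrix_inv F = transpose A ** A"
  shows "K_cone F \<gamma> = {X. sym_mat X \<and> A ** X ** transpose A \<in> circular_cone (mat 1) \<gamma>}"
proof -
  have tr: "trace (transpose A ** A ** Z) = trace (A ** Z ** transpose A)" for Z
    using trace_mul_sym[of "transpose A" "A ** Z"] by (simp add: matrix_mul_assoc)
  have "trace (matrix_inv F ** X) = mat 1 \<bullet> (A ** X ** transpose A)"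
    and "trace ((matrix_inv F ** X) ** (matrix_inv F ** X)) =
      trace ((A ** X ** transpose A) ** (A ** X ** transpose A))" for X
    using tr[of X] tr[of "X ** transpose A ** A ** X"]
    by (simp_all add: assms trace_eq_inner_mat_1 matrix_mul_assoc)
  thus ?thesis
    unfolding K_cone_def circular_cone_def by (auto simp: norm_eq_sqrt_trace_square sym_mat_congruence)
qed

lemma dual_cone_congruence:
  fixes U V :: "real^'n^'n"
  assumes UV: "U ** V = mat 1"
  shows "dual_cone {X. sym_mat X \<and> U ** X ** transpose U \<in> C} =
    {S. sym_mat S \<and> (\<forall>Y. sym_mat Y \<and> Y \<in> C \<longrightarrow> 0 \<le> Y \<bullet> (transpose V ** S ** V))}"
proof -
  have VU: "V ** U = mat 1" using UV matrix_left_right_inverse by blast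
  have VtUt: "transpose V ** transpose U = mat 1"
    by (metis UV matrix_transpose_mul transpose_mat)
  have tr: "trace (V ** Y ** transpose V ** S) = Y \<bullet> (transpose V ** S ** V)" if "sym_mat S" for Y S
    using trace_mul_sym[of V "Y ** transpose V ** S"]
      trace_mult_eq_inner[OF sym_mat_congruence[OF that, of "transpose V"], of Y]
    by (simp add: matrix_mul_assoc)
  have inv: "U ** (V ** Y ** transpose V) ** transpose U = Y" for Y
    by (metis UV VtUt matrix_mul_assoc matrix_mul_lid matrix_mul_rid)
  have inv': "V ** (U ** X ** transpose U) ** transpose V = X" for X
    by (metis VU matrix_transpose_mul transpose_mat matrix_mul_assoc matrix_mul_lid matrix_mul_rid)
  have "(\<forall>X. sym_mat X \<and> U ** X ** transpose U \<in> C \<longrightarrow> 0 \<le> trace (X ** S)) \<longleftrightarrow>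
    (\<forall>Y. sym_mat Y \<and> Y \<in> C \<longrightarrow> 0 \<le> Y \<bullet> (transpose V ** S ** V))" if "sym_mat S" for S
  proof safe
    fix Y assume "\<forall>X. sym_mat X \<and> U ** X ** transpose U \<in> C \<longrightarrow> 0 \<le> trace (X ** S)"
      and "sym_mat Y" "Y \<in> C"
    thus "0 \<le> Y \<bullet> (transpose V ** S ** V)"
      using inv[of Y] tr[OF that, of Y] sym_mat_congruence[of Y V] by auto
  next
    fix X assume "\<forall>Y. sym_mat Y \<and> Y \<in> C \<longrightarrow> 0 \<le> Y \<bullet> (transpose V ** S ** V)"
      and "sym_mat X" "U ** X ** transpose U \<in> C"
    thus "0 \<le> trace (X ** S)"
      using inv'[of X] tr[OF that, of "U ** X ** transpose U"] sym_mat_congruence[of X U] by auto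
  qed
  thus ?thesis unfolding dual_cone_def by auto
qed

lemma matrix_inv_mult_transpose:
  fixes U V :: "real^'n^'n"
  assumes "U ** V = mat 1"
  shows "matrix_inv (V ** transpose V) = transpose U ** U"
proof (rule matrix_inv_eqI)
  have "V ** U = mat 1" using assms matrix_left_right_inverse by blast
  moreover have "transpose V ** transpose U = mat 1"
    using assms by (metis matrix_transpose_mul transpose_mat)
  ultimately show "V ** transpose V ** (transpose U ** U) = mat 1"
    by (metis matrix_mul_assoc matrix_mul_lid)
qed

lemma sym_mat_circular_cone_dual:
  fixes Z :: "real^'n^'n"
  assumes "sym_mat Z" "0 < \<alpha>" "\<alpha>\<^sup>2 < real CARD('n)"
  shows "(\<forall>Y. sym_mat Y \<and> Y \<in> circular_cone (mat 1) \<alpha> \<longrightarrow> 0 \<le> Y \<bullet> Z) \<longleftrightarrow>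
    Z \<in> circular_cone (mat 1) (sqrt (real CARD('n) - \<alpha>\<^sup>2))"
  using circular_cone_dual_in_subspace[OF subspace_sym_mat _ _ inner_mat_1_self assms(2,3)] assms(1)
  by (auto simp: sym_mat_def)

theorem lemma3p1:
  fixes E :: "real^'n^'n" and \<alpha> :: real
  assumes "pos_def E"
    and "0 < \<alpha>" and "\<alpha> < sqrt (real CARD('n))"
  shows "dual_cone (K_cone E \<alpha>) = K_cone (matrix_inv E) (sqrt (real CARD('n) - \<alpha>\<^sup>2))"
proof -
  obtain U V :: "real^'n^'n" where UV: "U ** V = mat 1" and E: "E = V ** transpose V"
    using pos_def_factor[OF assms(1)] by blast
  have inv_E: "matrix_inv E = transpose U ** U"
    unfolding E using UV by (rule matrix_inv_mult_transpose)
  have "matrix_inv (matrix_inv E) = transpose (transpose V) ** transpose V"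
    using matrix_inv_mult_transpose[of "transpose V" "transpose U"] UV
    by (simp add: inv_E flip: matrix_transpose_mul)
  note K_inv_inv_E = K_cone_congruence[OF this]
  have \<alpha>: "\<alpha>\<^sup>2 < real CARD('n)"
    using assms(2,3) by (metis abs_of_pos real_sqrt_abs real_sqrt_less_iff)
  have "dual_cone (K_cone E \<alpha>) =
    {S. sym_mat S \<and> (\<forall>Y. sym_mat Y \<and> Y \<in> circular_cone (mat 1) \<alpha> \<longrightarrow> 0 \<le> Y \<bullet> (transpose V ** S ** V))}"
    using K_cone_congruence[OF inv_E] dual_cone_congruence[OF UV] by simp
  also have "\<dots> = {S. sym_mat S \<and> transpose V ** S ** V \<in> circular_cone (mat 1) (sqrt (real CARD('n) - \<alpha>\<^sup>2))}"
  proof (intro Collect_cong conj_cong refl)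
    fix S :: "real^'n^'n"
    assume "sym_mat S"
    from sym_mat_congruence[OF this, of "transpose V"]
    show "(\<forall>Y. sym_mat Y \<and> Y \<in> circular_cone (mat 1) \<alpha> \<longrightarrow> 0 \<le> Y \<bullet> (transpose V ** S ** V)) \<longleftrightarrow>
      transpose V ** S ** V \<in> circular_cone (mat 1) (sqrt (real CARD('n) - \<alpha>\<^sup>2))"
      using sym_mat_circular_cone_dual[OF _ assms(2) \<alpha>] by simp
  qed
  also have "\<dots> = K_cone (matrix_inv E) (sqrt (real CARD('n) - \<alpha>\<^sup>2))"
    using K_inv_inv_E by simp
  finally show ?thesis .
qed

end
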